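(* For every integer $d\ge 30$, $N_d>\frac{\sqrt d}{2}$; that is, there exists a well-rounded unimodular lattice in $\mathbb{R}^d$ whose covering radius is strictly larger than $\sqrt d/2$ (the covering radius of $\mathbb{Z}^d$).
   Context: A lattice $\Lambda\subset\mathbb{R}^d$ is \emph{well-rounded} if its shortest nonzero vectors (with respect to the Euclidean norm) span $\mathbb{R}^d$, and \emph{unimodular} if its covolume equals $1$. The \emph{covering radius} $r(\Lambda)$ of a lattice $\Lambda\subset\mathbb{R}^d$ is the least $r\ge 0$ such that $\mathbb{R}^d=\Lambda+B_r$, where $B_r$ is the closed Euclidean ball of radius $r$ centered at $0$. $N_d$ denotes the supremum of $r(\Lambda)$ over all well-rounded unimodular lattices $\Lambda\subset\mathbb{R}^d$. *)

theory Defs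
  imports "HOL-Analysis.Analysis"
begin

definition lattice_gen :: "real^'n^'n \<Rightarrow> (real^'n) set" where
  "lattice_gen B = range (\<lambda>k::int^'n. B *v (\<chi> i. of_int (k $ i)))"

definition is_lattice :: "(real^'n) set \<Rightarrow> bool" where
  "is_lattice L \<longleftrightarrow> (\<exists>B. invertible B \<and> L = lattice_gen B)"

text \<open>Covolume: absolute determinant of a basis (independent of the basis chosen).\<close>
definition covolume :: "(real^'n) set \<Rightarrow> real" where
  "covolume L = \<bar>det (SOME B. invertible B \<and> L = lattice_gen B)\<bar>"

definition unimodular :: "(real^'n) set \<Rightarrow> bool" where
  "unimodular L \<longleftrightarrow> is_lattice L \<and> covolume L = 1"

definition minimum_norm :: "(real^'n) set \<Rightarrow> real" where
  "minimum_norm L = Inf (norm ` (L - {0}))"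

definition shortest_vectors :: "(real^'n) set \<Rightarrow> (real^'n) set" where
  "shortest_vectors L = {v \<in> L. v \<noteq> 0 \<and> norm v = minimum_norm L}"

definition well_rounded :: "(real^'n) set \<Rightarrow> bool" where
  "well_rounded L \<longleftrightarrow> is_lattice L \<and> span (shortest_vectors L) = UNIV"

definition covering_radius :: "(real^'n) set \<Rightarrow> real" where
  "covering_radius L = Inf {r. r \<ge> 0 \<and> (\<forall>x. \<exists>v\<in>L. x \<in> cball v r)}"

end

theory Submission
  imports Defs
begin

text \<open>
  Split the coordinates into a set S of size k = d div 2 and its complement, and scale the
  checkerboard lattice \<open>D\<^sub>S\<close> on S and the lattice \<open>\<surd>2 \<int>\<close> on the complement by a common c > 0.
  The vectors \<open>c(\<pm>e\<^sub>i \<pm> e\<^sub>j)\<close> (i, j in S) and \<open>\<surd>2 c e\<^sub>i\<close> (i not in S) all have the minimal length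
  \<open>\<surd>2 c\<close> and span \<open>\<real>\<^sup>d\<close>, so the lattice is well-rounded, and c is fixed by unimodularity:
  \<open>2 \<surd>2\<^bsup>d - k\<^esup> c\<^sup>d = 1\<close>. The lattice lies in the rectangular grid with spacings c on S and
  \<open>\<surd>2 c\<close> off S, so the centre of a grid cell has distance at least \<open>c \<surd>(2d - k) / 2\<close> from it.
  For d \<ge> 30 the normalisation of c gives \<open>c\<^sup>2 (2d - k) > d\<close>.
\<close>

lemma det_Ints:
  fixes U :: "real^'n^'n"
  assumes "\<And>i j. U$i$j \<in> \<int>"
  shows "det U \<in> \<int>"
  unfolding det_def using assms by (intro Ints_sum Ints_mult Ints_prod) auto

lemma lattice_gen_column:
  "column j B \<in> lattice_gen B"
proof -
  have "B *v (\<chi> i. of_int (axis j (1::int) $ i)) = column j B"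
    by (simp add: matrix_vector_mult_def column_def vec_eq_iff axis_def if_distrib cong: if_cong)
  thus ?thesis unfolding lattice_gen_def by (metis rangeI)
qed

lemma lattice_gen_eq_imp_integral_change:
  fixes B B' :: "real^'n^'n"
  assumes "lattice_gen B = lattice_gen B'"
  obtains U where "B = B' ** U" "\<And>i j. U$i$j \<in> \<int>"
proof -
  have "\<forall>j. \<exists>k::int^'n. column j B = B' *v (\<chi> i. of_int (k$i))"
    using lattice_gen_column[of _ B] assms unfolding lattice_gen_def by blast
  then obtain K where K: "\<And>j. column j B = B' *v (\<chi> i. of_int (K j $ i))" by metis
  define U :: "real^'n^'n" where "U = (\<chi> i j. of_int (K j $ i))"
  have "B$i$j = (B' ** U)$i$j" for i j
    using arg_cong[OF K[of j], of "\<lambda>x. x$i"]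
    by (simp add: column_def matrix_vector_mult_def matrix_matrix_mult_def U_def)
  hence "B = B' ** U" by (simp add: vec_eq_iff)
  moreover have "U$i$j \<in> \<int>" for i j by (simp add: U_def)
  ultimately show thesis by (rule that)
qed

lemma abs_det_eq_if_lattice_gen_eq:
  fixes B B' :: "real^'n^'n"
  assumes "invertible B" "lattice_gen B = lattice_gen B'"
  shows "\<bar>det B\<bar> = \<bar>det B'\<bar>"
proof -
  obtain U where U: "B = B' ** U" "\<And>i j. U$i$j \<in> \<int>"
    using lattice_gen_eq_imp_integral_change assms(2) by blast
  obtain V where V: "B' = B ** V" "\<And>i j. V$i$j \<in> \<int>"
    using lattice_gen_eq_imp_integral_change assms(2)[symmetric] by blast
  have "det B = det B * (det V * det U)"
    using U V by (metis det_mul mult.assoc)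
  moreover have "det B \<noteq> 0" using assms(1) invertible_det_nz by blast
  ultimately have "det V * det U = 1" by simp
  moreover obtain a b where "det U = of_int a" "det V = of_int b"
    using det_Ints U(2) V(2) by (metis Ints_cases)
  ultimately have "b * a = 1"
    by (metis of_int_eq_1_iff of_int_mult)
  hence "\<bar>det U\<bar> = 1"
    using \<open>det U = of_int a\<close> abs_zmult_eq_1[of a b] by (simp add: mult.commute)
  thus ?thesis using U(1) by (simp add: det_mul abs_mult)
qed

lemma covolume_lattice_gen:
  fixes B :: "real^'n^'n"
  assumes "invertible B"
  shows "covolume (lattice_gen B) = \<bar>det B\<bar>"
proof -
  let ?B = "SOME B'. invertible B' \<and> lattice_gen B = lattice_gen B'"
  have "invertible ?B \<and> lattice_gen B = lattice_gen ?B"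
    by (rule someI[of _ B]) (simp add: assms)
  thus ?thesis unfolding covolume_def using abs_det_eq_if_lattice_gen_eq[OF assms] by metis
qed

lemma lattice_gen_covers:
  fixes B :: "real^'n^'n"
  assumes "invertible B"
  obtains r where "r \<ge> 0" "\<And>x. \<exists>v\<in>lattice_gen B. x \<in> cball v r"
proof -
  obtain K where K: "K > 0" "\<And>z. norm (B *v z) \<le> K * norm z"
    using linear_bounded_pos[OF matrix_vector_mul_linear] by blast
  obtain B' where B': "B ** B' = mat 1" using assms invertible_def by blast
  have "\<exists>v\<in>lattice_gen B. x \<in> cball v (K * CARD('n))" for x
  proof -
    define z where "z = B' *v x"
    define f :: "real^'n" where "f = (\<chi> i. of_int \<lfloor>z$i\<rfloor>)"
    have "B *v f \<in> lattice_gen B"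
      unfolding lattice_gen_def f_def by (rule range_eqI[of _ _ "\<chi> i. \<lfloor>z$i\<rfloor>"]) simp
    have "norm (z - f) \<le> (\<Sum>i\<in>UNIV. \<bar>z$i - of_int \<lfloor>z$i\<rfloor>\<bar>)"
      using norm_le_l1_cart[of "z - f"] by (simp add: f_def)
    also have "\<dots> \<le> (\<Sum>i\<in>(UNIV::'n set). 1)"
      by (intro sum_mono) linarith
    finally have "norm (z - f) \<le> CARD('n)" by simp
    have "dist (B *v f) x = norm (B *v (z - f))"
      using B' by (simp add: z_def dist_norm norm_minus_commute matrix_vector_mult_diff_distrib
          matrix_vector_mul_assoc)
    also have "\<dots> \<le> K * norm (z - f)" by (rule K(2))
    also have "\<dots> \<le> K * CARD('n)"
      using K(1) \<open>norm (z - f) \<le> CARD('n)\<close> by simp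
    finally show ?thesis using \<open>B *v f \<in> lattice_gen B\<close> by auto
  qed
  thus thesis using K(1) by (intro that[of "K * CARD('n)"]) auto
qed

lemma covering_radius_ge_half_diagonal:
  fixes L :: "(real^'n) set" and w :: "'n \<Rightarrow> real"
  assumes "is_lattice L" and w: "\<And>i. 0 \<le> w i"
    and grid: "L \<subseteq> range (\<lambda>k::int^'n. \<chi> i. w i * of_int (k$i))"
  shows "L2_set w UNIV / 2 \<le> covering_radius L"
  unfolding covering_radius_def
proof (rule cInf_greatest)
  obtain B where "invertible B" "L = lattice_gen B" using assms(1) is_lattice_def by blast
  then obtain r where "r \<ge> 0" "\<And>x. \<exists>v\<in>L. x \<in> cball v r" using lattice_gen_covers by metis
  thus "{r. 0 \<le> r \<and> (\<forall>x. \<exists>v\<in>L. x \<in> cball v r)} \<noteq> {}" by blast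
next
  fix r assume "r \<in> {r. 0 \<le> r \<and> (\<forall>x. \<exists>v\<in>L. x \<in> cball v r)}"
  \<comment> \<open>test the covering at the centre of a cell of the grid\<close>
  then obtain x where x: "x \<in> L" "dist x (\<chi> i. w i / 2) \<le> r" by auto
  then obtain k :: "int^'n" where k: "x = (\<chi> i. w i * of_int (k$i))" using grid by blast
  have "w i / 2 \<le> \<bar>w i * of_int (k$i) - w i / 2\<bar>" for i
  proof -
    have "1 \<le> \<bar>2 * of_int (k$i) - 1 :: real\<bar>"
      by (cases "k$i \<le> 0") linarith+
    hence "w i * 1 \<le> w i * \<bar>2 * of_int (k$i) - 1\<bar>" using w by (rule mult_left_mono)
    moreover have "w i * of_int (k$i) - w i / 2 = w i * (2 * of_int (k$i) - 1) / 2"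
      by (simp add: field_simps)
    hence "\<bar>w i * of_int (k$i) - w i / 2\<bar> = \<bar>w i\<bar> * \<bar>2 * of_int (k$i) - 1\<bar> / 2"
      by (simp only: abs_mult abs_divide abs_numeral)
    ultimately show ?thesis using w[of i] by simp
  qed
  hence "L2_set (\<lambda>i. w i / 2) UNIV \<le> L2_set (\<lambda>i. \<bar>(x - (\<chi> i. w i / 2))$i\<bar>) UNIV"
    using w by (intro L2_set_mono) (simp_all add: k)
  thus "L2_set w UNIV / 2 \<le> r"
    using x(2) L2_set_left_distrib[of "1/2" w UNIV]
    by (simp add: dist_norm norm_vec_def)
qed

lemma minimum_norm_eqI:
  assumes "x \<in> L" "x \<noteq> 0" "\<And>y. y \<in> L \<Longrightarrow> y \<noteq> 0 \<Longrightarrow> norm x \<le> norm y"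
  shows "minimum_norm L = norm x"
  unfolding minimum_norm_def using assms by (intro cInf_eq_minimum) auto

lemma det_diagonal_except_row:
  fixes A :: "'a::comm_ring_1^'n^'n"
  assumes "\<And>i j. i \<noteq> p \<Longrightarrow> i \<noteq> j \<Longrightarrow> A$i$j = 0"
  shows "det A = (\<Prod>i\<in>UNIV. A$i$i)"
proof -
  have "(\<Prod>i\<in>UNIV. A$i$\<sigma> i) = 0" if \<sigma>: "\<sigma> permutes UNIV" "\<sigma> \<noteq> id" for \<sigma>
  proof -
    have "\<not> \<sigma> permutes {p}" using \<sigma>(2) by simp
    then obtain i where "i \<noteq> p" "\<sigma> i \<noteq> i" using \<sigma>(1) unfolding permutes_def by blast
    hence "A$i$\<sigma> i = 0" using assms[of i "\<sigma> i"] by auto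
    thus ?thesis by (intro prod_zero) auto
  qed
  hence "det A = (\<Sum>\<sigma>\<in>{id}. of_int (sign \<sigma>) * (\<Prod>i\<in>UNIV. A$i$\<sigma> i))"
    unfolding det_def by (intro sum.mono_neutral_right) (auto simp: permutes_id)
  thus ?thesis by (simp add: sign_id)
qed

definition coord_weight :: "'n set \<Rightarrow> real \<Rightarrow> 'n \<Rightarrow> real" where
  "coord_weight S c i = (if i \<in> S then c else sqrt 2 * c)"

definition weighted_point :: "'n set \<Rightarrow> real \<Rightarrow> int^'n \<Rightarrow> real^'n" where
  "weighted_point S c v = (\<chi> i. coord_weight S c i * of_int (v$i))"

text \<open>The lattice \<open>c (D\<^sub>S \<oplus> \<surd>2 \<int>\<^bsup>UNIV - S\<^esup>)\<close>, where \<open>D\<^sub>S\<close> is the checkerboard lattice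
  (even coordinate sum) on the coordinates in S.\<close>
definition checkerboard_lattice :: "'n set \<Rightarrow> real \<Rightarrow> (real^'n) set" where
  "checkerboard_lattice S c = weighted_point S c ` {v. even (\<Sum>i\<in>S. v$i)}"

definition checkerboard_basis :: "'n set \<Rightarrow> 'n \<Rightarrow> real \<Rightarrow> real^'n^'n" where
  "checkerboard_basis S p c =
     (\<chi> i j. if i = p then (if j = p then 2 * c else if j \<in> S then - c else 0)
             else if i = j then coord_weight S c i else 0)"

lemma checkerboard_basis_mult:
  fixes k :: "int^'n"
  assumes "p \<in> S"
  shows "checkerboard_basis S p c *v (\<chi> i. of_int (k$i))
           = weighted_point S c (\<chi> i. if i = p then 2 * k$p - (\<Sum>j\<in>S-{p}. k$j) else k$i)"
proof -
  have row_p: "(\<Sum>j\<in>UNIV. (if j = p then 2 * c else if j \<in> S then - c else 0) * of_int (k$j))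
      = c * (2 * of_int (k$p) - (\<Sum>j\<in>S-{p}. of_int (k$j)))"
  proof -
    have "(\<Sum>j\<in>UNIV. (if j = p then 2 * c else if j \<in> S then - c else 0) * of_int (k$j))
        = (\<Sum>j\<in>UNIV. (if j = p then 3 * c * of_int (k$p) else 0)
                          + (if j \<in> S then - c * of_int (k$j) else 0))"
      using assms by (intro sum.cong) auto
    also have "\<dots> = 3 * c * of_int (k$p) - c * (\<Sum>j\<in>S. of_int (k$j))"
      by (simp add: sum.distrib sum_negf sum_distrib_left flip: sum.inter_restrict)
    also have "(\<Sum>j\<in>S. of_int (k$j)) = of_int (k$p) + (\<Sum>j\<in>S-{p}. of_int (k$j) :: real)"
      using assms by (simp add: sum.remove)
    finally show ?thesis by (simp add: algebra_simps)
  qed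
  have "(checkerboard_basis S p c *v (\<chi> i. of_int (k$i)))$i = weighted_point S c
            (\<chi> i. if i = p then 2 * k$p - (\<Sum>j\<in>S-{p}. k$j) else k$i) $ i" for i
  proof (cases "i = p")
    case True
    thus ?thesis using row_p assms
      by (simp add: matrix_vector_mult_def checkerboard_basis_def weighted_point_def coord_weight_def)
  next
    case False
    have "(\<Sum>j\<in>UNIV. (if i = j then coord_weight S c i else 0) * of_int (k$j))
        = coord_weight S c i * of_int (k$i)"
      by (simp add: if_distrib[of "\<lambda>x. x * _"] cong: if_cong)
    thus ?thesis using False
      by (simp add: matrix_vector_mult_def checkerboard_basis_def weighted_point_def)
  qed
  thus ?thesis unfolding vec_eq_iff by blast
qed

lemma lattice_gen_checkerboard_basis:
  fixes S :: "'n::finite set"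
  assumes "p \<in> S"
  shows "lattice_gen (checkerboard_basis S p c) = checkerboard_lattice S c"
proof -
  define T :: "int^'n \<Rightarrow> int^'n" where
    "T = (\<lambda>k. \<chi> i. if i = p then 2 * k$p - (\<Sum>j\<in>S-{p}. k$j) else k$i)"
  have sum_split: "(\<Sum>i\<in>S. v$i) = v$p + (\<Sum>i\<in>S-{p}. v$i)" for v :: "int^'n"
    using assms by (simp add: sum.remove)
  have "range T = {v. even (\<Sum>i\<in>S. v$i)}"
  proof (intro equalityI subsetI)
    fix v :: "int^'n" assume "v \<in> range T"
    then obtain k where "v = T k" by blast
    moreover have "(\<Sum>i\<in>S-{p}. T k $ i) = (\<Sum>i\<in>S-{p}. k$i)"
      by (intro sum.cong) (auto simp: T_def)
    ultimately show "v \<in> {v. even (\<Sum>i\<in>S. v$i)}"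
      using sum_split[of "T k"] by (simp add: T_def)
  next
    fix v :: "int^'n" assume "v \<in> {v. even (\<Sum>i\<in>S. v$i)}"
    hence even: "even (\<Sum>i\<in>S. v$i)" by simp
    define k :: "int^'n" where "k = (\<chi> i. if i = p then (\<Sum>i\<in>S. v$i) div 2 else v$i)"
    have "(\<Sum>j\<in>S-{p}. k$j) = (\<Sum>j\<in>S-{p}. v$j)"
      by (intro sum.cong) (auto simp: k_def)
    hence "T k = v"
      using even sum_split[of v] by (auto simp: T_def k_def vec_eq_iff)
    thus "v \<in> range T" by (metis rangeI)
  qed
  moreover have "lattice_gen (checkerboard_basis S p c) = weighted_point S c ` range T"
    unfolding lattice_gen_def checkerboard_basis_mult[OF assms] T_def by (simp add: image_image)
  ultimately show ?thesis by (simp add: checkerboard_lattice_def)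
qed

lemma det_checkerboard_basis:
  fixes S :: "'n::finite set"
  assumes "p \<in> S"
  shows "det (checkerboard_basis S p c) = 2 * sqrt 2 ^ (CARD('n) - card S) * c ^ CARD('n)"
proof -
  have "det (checkerboard_basis S p c) = (\<Prod>i\<in>UNIV. checkerboard_basis S p c $ i $ i)"
    by (rule det_diagonal_except_row[of p]) (simp add: checkerboard_basis_def)
  also have "\<dots> = 2 * c * (\<Prod>i\<in>UNIV-{p}. coord_weight S c i)"
    by (simp add: prod.remove[of UNIV p] checkerboard_basis_def)
  also have "\<dots> = 2 * (\<Prod>i\<in>UNIV. coord_weight S c i)"
    using assms by (simp add: prod.remove[of UNIV p] coord_weight_def)
  also have "(\<Prod>i\<in>UNIV. coord_weight S c i) = c ^ card S * (sqrt 2 * c) ^ (CARD('n) - card S)"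
    by (simp add: coord_weight_def prod.If_cases Compl_eq_Diff_UNIV card_Diff_subset)
  also have "\<dots> = sqrt 2 ^ (CARD('n) - card S) * c ^ CARD('n)"
    using card_mono[of UNIV S] by (simp add: power_mult_distrib mult.left_commute flip: power_add)
  finally show ?thesis by simp
qed

definition checkerboard_form :: "'n set \<Rightarrow> int^'n::finite \<Rightarrow> int" where
  "checkerboard_form S v = (\<Sum>i\<in>UNIV. (if i \<in> S then 1 else 2) * (v$i)^2)"

lemma norm_weighted_point:
  fixes S :: "'n::finite set"
  assumes "0 \<le> c"
  shows "norm (weighted_point S c v) = c * sqrt (of_int (checkerboard_form S v))"
proof -
  have "(\<Sum>i\<in>UNIV. (weighted_point S c v $ i)^2)
      = (\<Sum>i\<in>UNIV. c^2 * of_int ((if i \<in> S then 1 else 2) * (v$i)^2))"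
    by (intro sum.cong) (auto simp: weighted_point_def coord_weight_def power_mult_distrib)
  hence "norm (weighted_point S c v) = sqrt (c^2 * of_int (checkerboard_form S v))"
    by (simp add: norm_vec_def L2_set_def checkerboard_form_def sum_distrib_left)
  thus ?thesis using assms by (simp add: real_sqrt_mult)
qed

lemma int_square_ge_one: "(m::int) \<noteq> 0 \<Longrightarrow> 1 \<le> m^2"
proof -
  assume "m \<noteq> 0"
  hence "1 * 1 \<le> \<bar>m\<bar> * \<bar>m\<bar>" by (intro mult_mono) auto
  thus ?thesis by (simp add: power2_eq_square)
qed

lemma checkerboard_form_ge_two:
  fixes v :: "int^'n::finite"
  assumes even: "even (\<Sum>i\<in>S. v$i)" and "v \<noteq> 0"
  shows "2 \<le> checkerboard_form S v"
proof -
  define g where "g i = (if i \<in> S then 1 else 2) * (v$i)^2" for i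
  have sub: "sum g A \<le> checkerboard_form S v" for A
    unfolding checkerboard_form_def g_def[abs_def] by (intro sum_mono2) auto
  have g_ge: "(if i \<in> S then 1 else 2) \<le> g i" if "v$i \<noteq> 0" for i
    using int_square_ge_one[OF that] by (simp add: g_def)
  obtain i where i: "v$i \<noteq> 0" using assms(2) by (metis vec_eq_iff zero_index)
  consider (outside) j where "j \<notin> S" "v$j \<noteq> 0"
    | (two) j where "i \<in> S" "j \<in> S" "j \<noteq> i" "v$j \<noteq> 0"
    | (single) "i \<in> S" "\<And>j. j \<noteq> i \<Longrightarrow> v$j = 0"
    using i by blast
  thus ?thesis
  proof cases
    case outside
    thus ?thesis using g_ge[of j] sub[of "{j}"] by simp
  next
    case two
    thus ?thesis using g_ge[of i] g_ge[of j] i sub[of "{i, j}"] by simp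
  next
    case single
    have "(\<Sum>j\<in>S-{i}. v$j) = 0"
      using single(2) by (intro sum.neutral) auto
    hence "(\<Sum>j\<in>S. v$j) = v$i"
      using single(1) by (simp add: sum.remove[of S i])
    then obtain n where "v$i = 2 * n" using even by (auto elim: evenE)
    with i have "4 \<le> (v$i)^2" using int_square_ge_one[of n] by (simp add: power_mult_distrib)
    thus ?thesis using single sub[of "{i}"] by (simp add: g_def)
  qed
qed

lemma weighted_point_add: "weighted_point S c (a + b) = weighted_point S c a + weighted_point S c b"
  by (simp add: weighted_point_def vec_eq_iff algebra_simps)

lemma weighted_point_diff: "weighted_point S c (a - b) = weighted_point S c a - weighted_point S c b"
  by (simp add: weighted_point_def vec_eq_iff algebra_simps)

lemma weighted_point_axis: "weighted_point S c (axis i 1) = coord_weight S c i *\<^sub>R axis i 1"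
  by (simp add: weighted_point_def vec_eq_iff axis_def)

lemma sum_axis_component:
  "finite S \<Longrightarrow> (\<Sum>i\<in>S. axis j (1::int) $ i) = (if j \<in> S then 1 else 0)"
  by (simp add: axis_def)

lemma weighted_point_eq_0_iff:
  "0 < c \<Longrightarrow> weighted_point S c v = 0 \<longleftrightarrow> v = 0"
  by (auto simp: weighted_point_def coord_weight_def vec_eq_iff)

lemma norm_axis_plus_axis:
  assumes "i \<noteq> j"
  shows "norm (a *\<^sub>R axis i (1::real) + b *\<^sub>R axis j 1) = sqrt (a^2 + b^2)"
  using assms by (simp add: norm_eq_sqrt_inner inner_add_left inner_add_right inner_axis_axis
      power2_eq_square)

lemma minimum_norm_checkerboard_lattice:
  fixes S :: "'n::finite set"
  assumes "p \<in> S" "q \<in> S" "p \<noteq> q" "0 < c"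
  shows "minimum_norm (checkerboard_lattice S c) = sqrt 2 * c"
proof -
  let ?x = "weighted_point S c (axis p 1 + axis q 1)"
  have "?x = c *\<^sub>R axis p 1 + c *\<^sub>R axis q 1"
    using assms by (simp add: weighted_point_add weighted_point_axis coord_weight_def)
  hence norm_x: "norm ?x = sqrt 2 * c"
    using assms by (simp add: norm_axis_plus_axis real_sqrt_mult)
  have "?x \<in> checkerboard_lattice S c"
    using assms unfolding checkerboard_lattice_def
    by (intro imageI) (simp add: sum.distrib sum_axis_component)
  moreover have "norm ?x \<le> norm y" if y: "y \<in> checkerboard_lattice S c" "y \<noteq> 0" for y
  proof -
    obtain v where v: "even (\<Sum>i\<in>S. v$i)" "y = weighted_point S c v"
      using y(1) unfolding checkerboard_lattice_def by blast
    hence "2 \<le> checkerboard_form S v"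
      using y(2) assms(4) by (intro checkerboard_form_ge_two) (auto simp: weighted_point_eq_0_iff)
    thus ?thesis using assms(4) by (simp add: norm_x v(2) norm_weighted_point)
  qed
  moreover have "?x \<noteq> 0" using norm_x assms(4) by auto
  ultimately show ?thesis using norm_x minimum_norm_eqI by metis
qed

lemma span_shortest_vectors_checkerboard_lattice:
  fixes S :: "'n::finite set"
  assumes "p \<in> S" "q \<in> S" "p \<noteq> q" "0 < c"
  shows "span (shortest_vectors (checkerboard_lattice S c)) = UNIV"
proof -
  let ?V = "shortest_vectors (checkerboard_lattice S c)"
  have shortest: "x \<in> ?V"
    if "weighted_point S c v = x" "even (\<Sum>i\<in>S. v$i)" "norm x = sqrt 2 * c" for x v
    using that assms(4) minimum_norm_checkerboard_lattice[OF assms]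
    unfolding shortest_vectors_def checkerboard_lattice_def by auto
  have "axis j 1 \<in> span ?V" if j: "j \<in> S" for j
  proof -
    obtain r where r: "r \<in> S" "r \<noteq> j" using assms by metis
    have "c *\<^sub>R axis j 1 + c *\<^sub>R axis r 1 \<in> ?V"
      by (rule shortest[of "axis j 1 + axis r 1"])
        (use j r assms(4) in \<open>simp_all add: weighted_point_add weighted_point_axis coord_weight_def
          sum.distrib sum_axis_component norm_axis_plus_axis real_sqrt_mult\<close>)
    moreover have "c *\<^sub>R axis j 1 + (- c) *\<^sub>R axis r 1 \<in> ?V"
      by (rule shortest[of "axis j 1 - axis r 1"])
        (use j r assms(4) in \<open>simp_all add: weighted_point_diff weighted_point_axis coord_weight_def
          sum_subtractf sum_axis_component norm_axis_plus_axis[of j r c "- c", simplified]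
          real_sqrt_mult\<close>)
    moreover have "axis j 1 = (1 / (2 * c)) *\<^sub>R
        ((c *\<^sub>R axis j 1 + c *\<^sub>R axis r 1) + (c *\<^sub>R axis j 1 + (- c) *\<^sub>R axis r 1))"
      using assms(4) by (simp flip: scaleR_add_left)
    ultimately show ?thesis by (metis span_add span_base span_mul)
  qed
  moreover have "axis i 1 \<in> span ?V" if i: "i \<notin> S" for i
  proof -
    have "(sqrt 2 * c) *\<^sub>R axis i 1 \<in> ?V"
      by (rule shortest[of "axis i 1"])
        (use i assms(4) in \<open>simp_all add: weighted_point_axis coord_weight_def sum_axis_component\<close>)
    moreover have "axis i 1 = (1 / (sqrt 2 * c)) *\<^sub>R ((sqrt 2 * c) *\<^sub>R axis i (1::real))"
      using assms(4) by simp
    ultimately show ?thesis by (metis span_base span_mul)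
  qed
  ultimately have "Basis \<subseteq> span ?V" by (auto simp: Basis_vec_def)
  thus ?thesis by (metis span_Basis span_mono span_span top.extremum_unique)
qed

lemma L2_set_coord_weight:
  fixes S :: "'n::finite set"
  assumes "0 \<le> c"
  shows "L2_set (coord_weight S c) UNIV = c * sqrt (real (2 * CARD('n) - card S))"
proof -
  have card_le: "card S \<le> CARD('n)" by (rule card_mono) auto
  have "(\<Sum>i\<in>UNIV. (coord_weight S c i)^2) = (\<Sum>i\<in>UNIV. if i \<in> S then c^2 else 2 * c^2)"
    by (intro sum.cong) (auto simp: coord_weight_def power_mult_distrib)
  also have "\<dots> = c^2 * card S + 2 * c^2 * card (UNIV - S)"
    by (simp add: sum.If_cases Compl_eq_Diff_UNIV)
  also have "\<dots> = c^2 * real (2 * CARD('n) - card S)"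
    using card_le by (simp add: card_Diff_subset of_nat_diff algebra_simps)
  finally show ?thesis using assms by (simp add: L2_set_def real_sqrt_mult)
qed

lemma thirty_two_times_eight_pow_less: "30 \<le> d \<Longrightarrow> 32 * 8^d < (9::nat)^d"
proof (induction d rule: nat_induct_at_least)
  case base
  show ?case by simp
next
  case (Suc d)
  thus ?case by simp
qed

lemma checkerboard_growth:
  fixes d :: nat
  assumes "30 \<le> d"
  shows "4 * 2^(d - d div 2) * d^d < (2 * d - d div 2)^d"
proof -
  define m where "m = 2 * d - d div 2"
  \<comment> \<open>after multiplying by \<open>2\<^sup>d\<close> and using \<open>3d \<le> 2m\<close>, it suffices that \<open>4 \<cdot> 2\<^sup>m < 3\<^sup>d\<close>\<close>
  have "(4 * 2^m)^2 = 16 * (2::nat)^(2 * m)" by (simp add: power_mult_distrib power_even_eq)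
  also have "\<dots> \<le> 16 * 2^(3 * d + 1)" by (intro mult_left_mono power_increasing) (auto simp: m_def)
  also have "\<dots> = 32 * 8^d" by (simp add: power_add power_mult)
  also have "\<dots> < 9^d" by (rule thirty_two_times_eight_pow_less[OF assms])
  also have "\<dots> = (3^2)^d" by simp
  also have "\<dots> = (3^d)^2" by (simp only: mult.commute flip: power_mult)
  finally have "4 * 2^m < (3::nat)^d" by (rule power_less_imp_less_base) simp
  have "d + (d - d div 2) = m" unfolding m_def by presburger
  hence "(2::nat)^d * 2^(d - d div 2) = 2^m" by (simp flip: power_add)
  hence "2^d * (4 * 2^(d - d div 2) * d^d) = 4 * 2^m * d^d" by (simp add: ac_simps)
  also have "\<dots> < 3^d * d^d"
    using \<open>4 * 2^m < 3^d\<close> assms by (intro mult_strict_right_mono) auto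
  also have "\<dots> = (3 * d)^d" by (simp add: power_mult_distrib)
  also have "\<dots> \<le> (2 * m)^d" by (rule power_mono) (unfold m_def, presburger, simp)
  also have "\<dots> = 2^d * m^d" by (simp add: power_mult_distrib)
  finally have "2^d * (4 * 2^(d - d div 2) * d^d) < 2^d * m^d" .
  thus ?thesis unfolding m_def by simp
qed

lemma checkerboard_scale:
  fixes d :: nat
  assumes "30 \<le> d"
  obtains c :: real where "0 < c" "2 * sqrt 2 ^ (d - d div 2) * c ^ d = 1"
    "real d < c^2 * real (2 * d - d div 2)"
proof -
  define m where "m = 2 * d - d div 2"
  define a where "a = 2 * sqrt 2 ^ (d - d div 2)"
  define c where "c = root d (1 / a)"
  have "0 < a" by (simp add: a_def)
  hence c: "0 < c" "c ^ d = 1 / a" using assms by (simp_all add: c_def)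
  have "a^2 = 4 * 2 ^ (d - d div 2)"
    by (simp add: a_def power_mult_distrib flip: power_mult) (simp add: power_mult mult.commute)
  have "(c^2)^d = (c^d)^2" by (metis power_mult mult.commute)
  hence "(c^2 * real m)^d = real (m^d) / a^2"
    using c(2) by (simp add: power_mult_distrib power_divide)
  moreover have "real (4 * 2 ^ (d - d div 2) * d^d) < real (m^d)"
    using checkerboard_growth[OF assms] unfolding m_def by (simp only: of_nat_less_iff)
  ultimately have "real d ^ d < (c^2 * real m)^d"
    using \<open>0 < a\<close> \<open>a^2 = _\<close> by (simp add: less_divide_eq mult.commute)
  hence "real d < c^2 * real m"
    by (rule power_less_imp_less_base) simp
  moreover have "2 * sqrt 2 ^ (d - d div 2) * c ^ d = 1"
    using c \<open>0 < a\<close> by (simp add: a_def)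
  ultimately show thesis using c(1) that unfolding m_def by blast
qed

lemma is_lattice_checkerboard_lattice:
  fixes S :: "'n::finite set"
  assumes "p \<in> S" "0 < c"
  shows "is_lattice (checkerboard_lattice S c)"
proof -
  have "det (checkerboard_basis S p c) \<noteq> 0"
    using assms(2) by (simp add: det_checkerboard_basis[OF assms(1)])
  thus ?thesis
    using lattice_gen_checkerboard_basis[OF assms(1)] invertible_det_nz
    unfolding is_lattice_def by metis
qed

lemma covolume_checkerboard_lattice:
  fixes S :: "'n::finite set"
  assumes "p \<in> S" "0 < c"
  shows "covolume (checkerboard_lattice S c) = 2 * sqrt 2 ^ (CARD('n) - card S) * c ^ CARD('n)"
proof -
  have "0 < det (checkerboard_basis S p c)"
    using assms(2) by (simp add: det_checkerboard_basis[OF assms(1)])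
  hence "covolume (lattice_gen (checkerboard_basis S p c)) = det (checkerboard_basis S p c)"
    by (simp add: covolume_lattice_gen invertible_det_nz)
  thus ?thesis by (simp add: lattice_gen_checkerboard_basis[OF assms(1)] det_checkerboard_basis[OF assms(1)])
qed

lemma well_rounded_checkerboard_lattice:
  fixes S :: "'n::finite set"
  assumes "p \<in> S" "q \<in> S" "p \<noteq> q" "0 < c"
  shows "well_rounded (checkerboard_lattice S c)"
  using is_lattice_checkerboard_lattice[OF assms(1,4)] span_shortest_vectors_checkerboard_lattice[OF assms]
  by (simp add: well_rounded_def)

lemma covering_radius_checkerboard_lattice:
  fixes S :: "'n::finite set"
  assumes "p \<in> S" "0 < c"
  shows "c * sqrt (real (2 * CARD('n) - card S)) / 2 \<le> covering_radius (checkerboard_lattice S c)"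
proof -
  have "checkerboard_lattice S c \<subseteq> range (\<lambda>k. \<chi> i. coord_weight S c i * of_int (k$i))"
    by (auto simp: checkerboard_lattice_def weighted_point_def)
  hence "L2_set (coord_weight S c) UNIV / 2 \<le> covering_radius (checkerboard_lattice S c)"
    using assms(2)
    by (intro covering_radius_ge_half_diagonal[OF is_lattice_checkerboard_lattice[OF assms]])
      (auto simp: coord_weight_def)
  thus ?thesis using assms(2) by (simp add: L2_set_coord_weight)
qed

theorem mainTheorem2:
  assumes "CARD('n) \<ge> 30"
  shows "\<exists>L :: (real^'n::finite) set.
           well_rounded L \<and> unimodular L \<and> covering_radius L > sqrt (real CARD('n)) / 2"
proof -
  define d where "d = CARD('n)"
  have "30 \<le> d" using assms by (simp add: d_def)
  obtain S :: "'n set" where S: "card S = d div 2"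
    using obtain_subset_with_card_n[of "d div 2" "UNIV :: 'n set"] by (auto simp: d_def)
  have "2 \<le> card S" using S \<open>30 \<le> d\<close> by simp
  then obtain T where "T \<subseteq> S" "card T = 2" by (metis obtain_subset_with_card_n)
  then obtain p q where pq: "p \<in> S" "q \<in> S" "p \<noteq> q" by (auto simp: card_2_iff)
  obtain c where c: "0 < c" "2 * sqrt 2 ^ (d - d div 2) * c ^ d = 1"
    "real d < c^2 * real (2 * d - d div 2)"
    using checkerboard_scale[OF \<open>30 \<le> d\<close>] by blast
  let ?L = "checkerboard_lattice S c"
  have "unimodular ?L"
    using is_lattice_checkerboard_lattice[OF pq(1) c(1)] covolume_checkerboard_lattice[OF pq(1) c(1)]
      c(2) S by (simp add: unimodular_def d_def)
  moreover have "sqrt (real d) < c * sqrt (real (2 * d - d div 2))"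
    using real_sqrt_less_mono[OF c(3)] c(1) by (simp add: real_sqrt_mult)
  ultimately show ?thesis
    using well_rounded_checkerboard_lattice[OF pq c(1)]
      covering_radius_checkerboard_lattice[OF pq(1) c(1)] S
    unfolding d_def by force
qed

end
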